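(* Let $G$ be a finite connected graph with node set $V$ and let $r$ be a ranking of $V$. There is a one-to-all distance based algorithm which computes all eccentricities $e(v)$, $v\in V$, a tight lower certificate $L\subseteq A_r(V)$, and the set $U^{\preceq}$ (which is the unique minimum-size tight upper certificate), using $|U^{\preceq}|+2|L|$ one-to-all distance queries.
   Context: $G$ is undirected, unweighted, connected with finite node set $V$; $d$ is shortest-path distance, $e(u)=\max_v d(u,v)$. A ranking $r$ is an injective map from $V$ to a totally ordered set; the antipode $A_r(u)$ is the node $v$ maximizing $(d(u,v),r(v))$ lexicographically; $A_r(V)=\{A_r(u):u\in V\}$. A one-to-all distance query from $x$ computes $(d(x,v))_{v\in V}$. For $L\subseteq V$, $e_L(v)=\max_{x\in L}d(v,x)$; for $U\subseteq V$, $e^U(v)=\min_{x\in U}(d(v,x)+e(x))$. $L$ is a tight lower certificate if $e_L(v)=e(v)$ for all $v$; $U$ is a tight upper certificate if $e^U(v)=e(v)$ for all $v$. Write $u\preceq x$ if $e(u)=d(u,x)+e(x)$; $U^{\preceq}$ is the set of nodes $x$ that are maximal for $\preceq$ (i.e. $x\preceq y$ implies $y=x$). *)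

theory Defs
  imports Main
begin

definition walk :: "('a \<Rightarrow> 'a \<Rightarrow> bool) \<Rightarrow> 'a list \<Rightarrow> bool" where
  "walk E xs \<longleftrightarrow> xs \<noteq> [] \<and> (\<forall>i. Suc i < length xs \<longrightarrow> E (xs ! i) (xs ! Suc i))"

definition conn_graph :: "'a set \<Rightarrow> ('a \<Rightarrow> 'a \<Rightarrow> bool) \<Rightarrow> bool" where
  "conn_graph V E \<longleftrightarrow> finite V \<and> V \<noteq> {}
     \<and> (\<forall>u v. E u v \<longrightarrow> u \<in> V \<and> v \<in> V)
     \<and> (\<forall>u v. E u v \<longrightarrow> E v u) \<and> (\<forall>u. \<not> E u u)
     \<and> (\<forall>u\<in>V. \<forall>v\<in>V. \<exists>xs. walk E xs \<and> hd xs = u \<and> last xs = v)"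

definition dist :: "('a \<Rightarrow> 'a \<Rightarrow> bool) \<Rightarrow> 'a \<Rightarrow> 'a \<Rightarrow> nat" where
  "dist E u v = (LEAST n. \<exists>xs. walk E xs \<and> hd xs = u \<and> last xs = v \<and> length xs = Suc n)"

definition ecc :: "'a set \<Rightarrow> ('a \<Rightarrow> 'a \<Rightarrow> bool) \<Rightarrow> 'a \<Rightarrow> nat" where
  "ecc V E u = Max ((\<lambda>v. dist E u v) ` V)"

definition antipode :: "'a set \<Rightarrow> ('a \<Rightarrow> 'a \<Rightarrow> bool) \<Rightarrow> ('a \<Rightarrow> 'b::linorder) \<Rightarrow> 'a \<Rightarrow> 'a" where
  "antipode V E r u = (THE v. v \<in> V \<and> (\<forall>w\<in>V. w \<noteq> v \<longrightarrow>
      dist E u w < dist E u v \<or> (dist E u w = dist E u v \<and> r w < r v)))"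

definition ecc_low :: "('a \<Rightarrow> 'a \<Rightarrow> bool) \<Rightarrow> 'a set \<Rightarrow> 'a \<Rightarrow> nat" where
  "ecc_low E L v = Max ((\<lambda>x. dist E v x) ` L)"

definition ecc_up :: "'a set \<Rightarrow> ('a \<Rightarrow> 'a \<Rightarrow> bool) \<Rightarrow> 'a set \<Rightarrow> 'a \<Rightarrow> nat" where
  "ecc_up V E U v = Min ((\<lambda>x. dist E v x + ecc V E x) ` U)"

text \<open>Empty certificates are excluded (max/min over the empty set is -\<infinity>/+\<infinity>,
  never equal to an eccentricity).\<close>
definition tight_lower :: "'a set \<Rightarrow> ('a \<Rightarrow> 'a \<Rightarrow> bool) \<Rightarrow> 'a set \<Rightarrow> bool" where
  "tight_lower V E L \<longleftrightarrow> L \<subseteq> V \<and> L \<noteq> {} \<and> (\<forall>v\<in>V. ecc_low E L v = ecc V E v)"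

definition tight_upper :: "'a set \<Rightarrow> ('a \<Rightarrow> 'a \<Rightarrow> bool) \<Rightarrow> 'a set \<Rightarrow> bool" where
  "tight_upper V E U \<longleftrightarrow> U \<subseteq> V \<and> U \<noteq> {} \<and> (\<forall>v\<in>V. ecc_up V E U v = ecc V E v)"

definition preceq :: "'a set \<Rightarrow> ('a \<Rightarrow> 'a \<Rightarrow> bool) \<Rightarrow> 'a \<Rightarrow> 'a \<Rightarrow> bool" where
  "preceq V E u x \<longleftrightarrow> ecc V E u = dist E u x + ecc V E x"

definition Upre :: "'a set \<Rightarrow> ('a \<Rightarrow> 'a \<Rightarrow> bool) \<Rightarrow> 'a set" where
  "Upre V E = {x\<in>V. \<forall>y\<in>V. preceq V E x y \<longrightarrow> y = x}"

definition query :: "'a set \<Rightarrow> ('a \<Rightarrow> 'a \<Rightarrow> bool) \<Rightarrow> 'a \<Rightarrow> ('a \<Rightarrow> nat)" where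
  "query V E x = (\<lambda>v. if v \<in> V then dist E x v else 0)"

text \<open>An algorithm, given the history of queries and answers, either asks the next
  query (Inl x) or stops with output (eccentricities, L, U) (Inr).\<close>
type_synonym ('a) strategy =
  "('a \<times> ('a \<Rightarrow> nat)) list \<Rightarrow> 'a + (('a \<Rightarrow> nat) \<times> 'a set \<times> 'a set)"

primrec trace :: "'a strategy \<Rightarrow> ('a \<Rightarrow> ('a \<Rightarrow> nat)) \<Rightarrow> nat \<Rightarrow> ('a \<times> ('a \<Rightarrow> nat)) list" where
  "trace A Q 0 = []"
| "trace A Q (Suc k) = (case A (trace A Q k) of
      Inl x \<Rightarrow> trace A Q k @ [(x, Q x)]
    | Inr _ \<Rightarrow> trace A Q k)"

end

theory Submission
  imports Defs "HOL-Library.Product_Lexorder"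
begin

(* The bounds e_L(v) = max over x in L of d(v,x) and e^U(v) = min over x in U of d(v,x) + e(x)
   always satisfy e_L(v) <= e(v) <= e^U(v). The algorithm repeatedly queries an undetermined node x
   (one with e_L(x) < e^U(x)) of least lower bound. If e_L(x) < e(x), the antipode of x lies outside
   L and is queried next and added to L: two queries per element of L. Otherwise e_L(x) = e(x), and
   x is a maximal node not yet in U: a maximal z strictly above x has e(z) < e(x); if z were in U it
   would already give e^U(x) = e(x), and if not, z is undetermined with e_L(z) <= e(z) < e_L(x),
   contradicting the choice of x. So each remaining query adds a new element of U^preceq. Once no
   node is undetermined, L and U are tight, and every tight upper certificate contains all maximal
   nodes, whence U = U^preceq is the unique one of minimum size. *)

lemma walk_iff_successively: "walk E xs \<longleftrightarrow> xs \<noteq> [] \<and> successively E xs"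
  by (simp add: walk_def successively_conv_nth)

lemma walk_append:
  assumes "walk E xs" "walk E ys" "last xs = hd ys"
  shows "walk E (xs @ tl ys)"
proof -
  have "ys = hd ys # tl ys" using assms(2) by (simp add: walk_def)
  then have "successively E (hd ys # tl ys)" using assms(2) by (simp add: walk_iff_successively)
  then show ?thesis using assms
    by (auto simp: walk_iff_successively successively_append_iff successively_Cons)
qed

lemma walk_rev: "walk E xs \<Longrightarrow> symp E \<Longrightarrow> walk E (rev xs)"
  by (auto simp: walk_iff_successively elim: successively_mono dest: sympD)

lemma dist_le_walk_length:
  assumes "walk E xs" "hd xs = u" "last xs = v"
  shows "dist E u v \<le> length xs - 1"
  unfolding dist_def using assms by (intro Least_le) (auto simp: walk_def)

locale connected_graph =
  fixes V :: "'a set" and E :: "'a \<Rightarrow> 'a \<Rightarrow> bool"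
  assumes conn_graph: "conn_graph V E"
begin

abbreviation d where "d \<equiv> dist E"
abbreviation e where "e \<equiv> ecc V E"

lemma finite_V: "finite V" and V_nonempty: "V \<noteq> {}" and symp_E: "symp E"
  and walk_exists: "\<And>u v. u \<in> V \<Longrightarrow> v \<in> V \<Longrightarrow> \<exists>xs. walk E xs \<and> hd xs = u \<and> last xs = v"
  using conn_graph unfolding conn_graph_def by (auto intro: sympI)

lemma finite_subset_V: "S \<subseteq> V \<Longrightarrow> finite S"
  using finite_V by (rule rev_finite_subset)

lemma shortest_walk:
  assumes "u \<in> V" "v \<in> V"
  shows "\<exists>xs. walk E xs \<and> hd xs = u \<and> last xs = v \<and> length xs = Suc (d u v)"
proof -
  obtain xs where "walk E xs" "hd xs = u" "last xs = v"
    using walk_exists assms by blast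
  then have "\<exists>n xs. walk E xs \<and> hd xs = u \<and> last xs = v \<and> length xs = Suc n"
    by (metis Suc_pred length_greater_0_conv walk_def)
  then show ?thesis unfolding dist_def by (rule LeastI_ex)
qed

lemma dist_self: "d u u = 0"
  using dist_le_walk_length[of E "[u]"] by (simp add: walk_def)

lemma dist_commute: "u \<in> V \<Longrightarrow> v \<in> V \<Longrightarrow> d u v = d v u"
  using shortest_walk dist_le_walk_length walk_rev[OF _ symp_E]
  by (metis hd_rev last_rev length_rev diff_Suc_1 le_antisym)

lemma dist_triangle:
  assumes "u \<in> V" "v \<in> V" "w \<in> V"
  shows "d u w \<le> d u v + d v w"
proof -
  obtain xs ys where xs: "walk E xs" "hd xs = u" "last xs = v" "length xs = Suc (d u v)"
    and ys: "walk E ys" "hd ys = v" "last ys = w" "length ys = Suc (d v w)"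
    using shortest_walk assms by metis
  have "walk E (xs @ tl ys)" using walk_append[OF xs(1) ys(1)] xs ys by simp
  moreover have "hd (xs @ tl ys) = u" using xs by (simp add: walk_def)
  moreover have "last (xs @ tl ys) = w"
    using xs ys by (cases ys) (auto simp: walk_def)
  ultimately show ?thesis using dist_le_walk_length xs ys by fastforce
qed

lemma dist_eq_0_imp_eq: "u \<in> V \<Longrightarrow> v \<in> V \<Longrightarrow> d u v = 0 \<Longrightarrow> u = v"
  using shortest_walk by (metis One_nat_def last_ConsL length_0_conv length_Suc_conv list.sel(1))

lemma dist_le_ecc: "u \<in> V \<Longrightarrow> w \<in> V \<Longrightarrow> d u w \<le> e u"
  unfolding ecc_def using finite_V by simp

lemma ecc_attained: "u \<in> V \<Longrightarrow> \<exists>w\<in>V. d u w = e u"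
  unfolding ecc_def using finite_V V_nonempty by (metis (mono_tags, lifting) Max_in finite_imageI image_iff image_is_empty)

lemma ecc_le_dist_plus_ecc:
  assumes "u \<in> V" "y \<in> V"
  shows "e u \<le> d u y + e y"
proof -
  obtain w where w: "w \<in> V" "d u w = e u" using ecc_attained assms by blast
  have "d u w \<le> d u y + d y w" using dist_triangle assms w by blast
  also have "\<dots> \<le> d u y + e y" using dist_le_ecc assms w by simp
  finally show ?thesis using w by simp
qed

lemma preceq_refl: "preceq V E u u"
  unfolding preceq_def by (simp add: dist_self)

lemma preceq_trans:
  "u \<in> V \<Longrightarrow> x \<in> V \<Longrightarrow> y \<in> V \<Longrightarrow> preceq V E u x \<Longrightarrow> preceq V E x y \<Longrightarrow> preceq V E u y"
  unfolding preceq_def using dist_triangle[of u x y] ecc_le_dist_plus_ecc[of u y] by linarith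

lemma preceq_ecc_less: "u \<in> V \<Longrightarrow> y \<in> V \<Longrightarrow> preceq V E u y \<Longrightarrow> y \<noteq> u \<Longrightarrow> e y < e u"
  unfolding preceq_def using dist_eq_0_imp_eq[of u y] by fastforce

lemma Upre_subset: "Upre V E \<subseteq> V"
  unfolding Upre_def by auto

lemma Upre_above:
  assumes "v \<in> V"
  obtains y where "y \<in> Upre V E" "preceq V E v y"
proof -
  define S where "S = {y\<in>V. preceq V E v y}"
  have "v \<in> S" "finite S" unfolding S_def using assms preceq_refl finite_V by auto
  then obtain y where y: "y \<in> S" and y_min: "\<And>z. z \<in> S \<Longrightarrow> e y \<le> e z"
    using arg_min_least arg_min_if_finite(1) by (metis empty_iff)
  have "y \<in> Upre V E" unfolding Upre_def
  proof (safe)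
    show "y \<in> V" using y S_def by simp
  next
    fix z assume z: "z \<in> V" "preceq V E y z"
    then have "z \<in> S" using preceq_trans[of v y z] y assms unfolding S_def by simp
    then show "z = y" using preceq_ecc_less[of y z] y_min z y unfolding S_def by fastforce
  qed
  then show ?thesis using that y S_def by blast
qed

lemma Upre_strictly_above:
  assumes "x \<in> V" "x \<notin> Upre V E"
  obtains z where "z \<in> Upre V E" "preceq V E x z" "e z < e x"
proof -
  obtain y where y: "y \<in> V" "preceq V E x y" "y \<noteq> x" using assms unfolding Upre_def by blast
  obtain z where z: "z \<in> Upre V E" "preceq V E y z" using Upre_above y(1) by blast
  have "z \<in> V" using z Upre_subset by blast
  have "e y < e x" "e z \<le> e y"
    using preceq_ecc_less[OF assms(1) y(1,2,3)] preceq_ecc_less[OF y(1) \<open>z \<in> V\<close> z(2)] by force+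
  then show ?thesis using that z preceq_trans[OF assms(1) y(1) \<open>z \<in> V\<close> y(2) z(2)] by simp
qed

lemma ecc_low_le_ecc: "L \<subseteq> V \<Longrightarrow> L \<noteq> {} \<Longrightarrow> v \<in> V \<Longrightarrow> ecc_low E L v \<le> e v"
  unfolding ecc_low_def using finite_subset_V dist_le_ecc by (subst Max_le_iff) auto

lemma dist_le_ecc_low: "L \<subseteq> V \<Longrightarrow> x \<in> L \<Longrightarrow> d v x \<le> ecc_low E L v"
  unfolding ecc_low_def using finite_subset_V by simp

lemma ecc_le_ecc_up: "U \<subseteq> V \<Longrightarrow> U \<noteq> {} \<Longrightarrow> v \<in> V \<Longrightarrow> e v \<le> ecc_up V E U v"
  unfolding ecc_up_def using finite_subset_V ecc_le_dist_plus_ecc by (subst Min_ge_iff) auto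

lemma ecc_up_le: "U \<subseteq> V \<Longrightarrow> x \<in> U \<Longrightarrow> ecc_up V E U v \<le> d v x + e x"
  unfolding ecc_up_def using finite_subset_V by simp

lemma ecc_up_attained: "U \<subseteq> V \<Longrightarrow> U \<noteq> {} \<Longrightarrow> \<exists>x\<in>U. ecc_up V E U v = d v x + e x"
  unfolding ecc_up_def using finite_subset_V
  by (metis (mono_tags, lifting) Min_in finite_imageI image_iff image_is_empty)

lemma Upre_mem_if_ecc_up_eq:
  assumes "U \<subseteq> V" "U \<noteq> {}" "z \<in> Upre V E" "ecc_up V E U z = e z"
  shows "z \<in> U"
proof -
  obtain w where "w \<in> U" "ecc_up V E U z = d z w + e w" using ecc_up_attained assms by blast
  then have "preceq V E z w" using assms unfolding preceq_def by simp
  then show ?thesis using assms \<open>w \<in> U\<close> unfolding Upre_def by blast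
qed

lemma tight_upper_Upre: "tight_upper V E (Upre V E)"
  unfolding tight_upper_def
proof (intro conjI ballI)
  show "Upre V E \<noteq> {}" using Upre_above V_nonempty by blast
  fix v assume v: "v \<in> V"
  obtain y where y: "y \<in> Upre V E" "preceq V E v y" using Upre_above v by blast
  have "ecc_up V E (Upre V E) v \<le> e v"
    using ecc_up_le[OF Upre_subset y(1)] y(2) unfolding preceq_def by simp
  moreover have "e v \<le> ecc_up V E (Upre V E) v"
    using ecc_le_ecc_up[OF Upre_subset _ v] y(1) by blast
  ultimately show "ecc_up V E (Upre V E) v = e v" by simp
qed (rule Upre_subset)

lemma Upre_subset_tight_upper: "tight_upper V E U \<Longrightarrow> Upre V E \<subseteq> U"
  using Upre_mem_if_ecc_up_eq Upre_subset unfolding tight_upper_def by blast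

lemma Upre_minimum_tight_upper:
  assumes "tight_upper V E U"
  shows "card (Upre V E) \<le> card U" "card U = card (Upre V E) \<Longrightarrow> U = Upre V E"
  using Upre_subset_tight_upper[OF assms] assms finite_subset_V card_mono card_subset_eq
  unfolding tight_upper_def by metis+

end

definition undetermined :: "'a set \<Rightarrow> ('a \<Rightarrow> 'a \<Rightarrow> bool) \<Rightarrow> 'a set \<Rightarrow> 'a set \<Rightarrow> 'a \<Rightarrow> bool" where
  "undetermined V E L U v \<longleftrightarrow> L = {} \<or> U = {} \<or> ecc_low E L v < ecc_up V E U v"

context connected_graph
begin

lemma undetermined_if_in_Upre_diff:
  assumes "L \<subseteq> V" "U \<subseteq> V" "z \<in> Upre V E - U"
  shows "undetermined V E L U z"
proof (cases "L = {} \<or> U = {}")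
  case False
  have "z \<in> V" using assms(3) Upre_subset by blast
  then have "ecc_low E L z \<le> e z" "e z \<le> ecc_up V E U z"
    using False assms ecc_low_le_ecc ecc_le_ecc_up by auto
  moreover have "ecc_up V E U z \<noteq> e z" using Upre_mem_if_ecc_up_eq False assms by blast
  ultimately show ?thesis unfolding undetermined_def by simp
qed (auto simp: undetermined_def)

lemma least_undetermined_in_Upre:
  assumes L: "L \<subseteq> V" "L \<noteq> {}" and U: "U \<subseteq> Upre V E" and x: "x \<in> V"
    and x_undet: "undetermined V E L U x"
    and x_least: "\<And>w. w \<in> V \<Longrightarrow> undetermined V E L U w \<Longrightarrow> ecc_low E L x \<le> ecc_low E L w"
    and x_tight: "e x \<le> ecc_low E L x"
  shows "x \<in> Upre V E - U"
proof -
  have UV: "U \<subseteq> V" using U Upre_subset by blast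
  have low_x: "ecc_low E L x = e x" using ecc_low_le_ecc[OF L x] x_tight by simp
  have not_below_U: "\<not> preceq V E x z" if "z \<in> U" for z
  proof
    assume "preceq V E x z"
    then have "ecc_up V E U x \<le> ecc_low E L x"
      using ecc_up_le[OF UV that] low_x unfolding preceq_def by simp
    then show False using x_undet L(2) that unfolding undetermined_def by auto
  qed
  have "x \<in> Upre V E"
  proof (rule ccontr)
    assume "x \<notin> Upre V E"
    then obtain z where z: "z \<in> Upre V E" "preceq V E x z" "e z < e x"
      using Upre_strictly_above x by blast
    have "z \<in> V" "z \<notin> U" using z not_below_U Upre_subset by auto
    then have "ecc_low E L x \<le> ecc_low E L z"
      using x_least undetermined_if_in_Upre_diff[OF L(1) UV] z(1) by blast
    also have "\<dots> \<le> e z" using ecc_low_le_ecc L \<open>z \<in> V\<close> by blast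
    finally show False using z(3) low_x by simp
  qed
  moreover have "x \<notin> U" using not_below_U preceq_refl by blast
  ultimately show ?thesis by simp
qed

lemma tight_if_none_undetermined:
  assumes "L \<subseteq> V" "U \<subseteq> V" "\<forall>v\<in>V. \<not> undetermined V E L U v"
  shows "tight_lower V E L" "tight_upper V E U"
proof -
  have ne: "L \<noteq> {}" "U \<noteq> {}" using assms(3) V_nonempty unfolding undetermined_def by auto
  have "ecc_low E L v = e v \<and> ecc_up V E U v = e v" if "v \<in> V" for v
    using assms ne ecc_low_le_ecc[OF assms(1) ne(1) that] ecc_le_ecc_up[OF assms(2) ne(2) that] that
    unfolding undetermined_def by fastforce
  then show "tight_lower V E L" "tight_upper V E U"
    unfolding tight_lower_def tight_upper_def using assms ne by auto
qed

end

text \<open>The state records the lower certificate \<open>L\<close>, the upper certificate \<open>U\<close>, possibly an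
  antipode that is to be queried next and added to \<open>L\<close>, and the rows \<open>K x\<close> received so far.\<close>
type_synonym 'a alg_state = "'a set \<times> 'a set \<times> 'a option \<times> ('a \<Rightarrow> 'a \<Rightarrow> nat)"

definition row_ecc_low :: "('a \<Rightarrow> 'a \<Rightarrow> nat) \<Rightarrow> 'a set \<Rightarrow> 'a \<Rightarrow> nat" where
  "row_ecc_low K L v = Max ((\<lambda>x. K x v) ` L)"

definition row_ecc_up :: "'a set \<Rightarrow> ('a \<Rightarrow> 'a \<Rightarrow> nat) \<Rightarrow> 'a set \<Rightarrow> 'a \<Rightarrow> nat" where
  "row_ecc_up V K U v = Min ((\<lambda>x. K x v + Max (K x ` V)) ` U)"

definition row_undetermined :: "'a set \<Rightarrow> ('a \<Rightarrow> 'a \<Rightarrow> nat) \<Rightarrow> 'a set \<Rightarrow> 'a set \<Rightarrow> 'a \<Rightarrow> bool" where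
  "row_undetermined V K L U v \<longleftrightarrow> L = {} \<or> U = {} \<or> row_ecc_low K L v < row_ecc_up V K U v"

definition row_antipode :: "'a set \<Rightarrow> ('a \<Rightarrow> 'b::linorder) \<Rightarrow> ('a \<Rightarrow> nat) \<Rightarrow> 'a" where
  "row_antipode V r f = (THE a. a \<in> V \<and> (\<forall>w\<in>V. w \<noteq> a \<longrightarrow> f w < f a \<or> (f w = f a \<and> r w < r a)))"

fun state_update :: "'a set \<Rightarrow> ('a \<Rightarrow> 'b::linorder) \<Rightarrow> 'a alg_state \<Rightarrow> 'a \<times> ('a \<Rightarrow> nat) \<Rightarrow> 'a alg_state" where
  "state_update V r (L, U, Some a, K) (x, f) = (insert x L, U, None, K(x := f))"
| "state_update V r (L, U, None, K) (x, f) =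
     (if L = {} \<or> row_ecc_low K L x < Max (f ` V) then (L, U, Some (row_antipode V r f), K(x := f))
      else (L, insert x U, None, K(x := f)))"

definition replay :: "'a set \<Rightarrow> ('a \<Rightarrow> 'b::linorder) \<Rightarrow> ('a \<times> ('a \<Rightarrow> nat)) list \<Rightarrow> 'a alg_state" where
  "replay V r h = foldl (state_update V r) ({}, {}, None, \<lambda>_ _. 0) h"

definition ecc_algorithm :: "'a set \<Rightarrow> ('a \<Rightarrow> 'b::linorder) \<Rightarrow> 'a strategy" where
  "ecc_algorithm V r h = (case replay V r h of
      (L, U, Some a, K) \<Rightarrow> Inl a
    | (L, U, None, K) \<Rightarrow>
        let D = {v \<in> V. row_undetermined V K L U v}
        in if D = {} then Inr (row_ecc_low K L, L, U) else Inl (arg_min_on (row_ecc_low K L) D))"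

lemma replay_snoc: "replay V r (h @ [p]) = state_update V r (replay V r h) p"
  unfolding replay_def by simp

lemma length_trace:
  "(\<forall>j<k. \<exists>x. A (trace A Q j) = Inl x) \<Longrightarrow> length (trace A Q k) = k"
proof (induction k)
  case (Suc k)
  then obtain x where "A (trace A Q k) = Inl x" by blast
  with Suc show ?case by simp
qed simp

lemma trace_halts:
  assumes "\<And>j. length (trace A Q j) \<le> N"
  shows "\<exists>k z. (\<forall>j<k. \<exists>x. A (trace A Q j) = Inl x) \<and> A (trace A Q k) = Inr z"
proof -
  let ?halts = "\<lambda>k. \<exists>z. A (trace A Q k) = Inr z"
  have not_halts: "\<exists>x. A (trace A Q j) = Inl x" if "\<not> ?halts j" for j
    using that by (cases "A (trace A Q j)") auto
  have "\<exists>k. ?halts k"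
  proof (rule ccontr)
    assume "\<nexists>k. ?halts k"
    then have "length (trace A Q (Suc N)) = Suc N" using not_halts length_trace by blast
    then show False using assms[of "Suc N"] by simp
  qed
  then have "?halts (LEAST k. ?halts k)" by (rule LeastI_ex)
  moreover have "\<exists>x. A (trace A Q j) = Inl x" if "j < (LEAST k. ?halts k)" for j
    using not_halts not_less_Least[OF that] by blast
  ultimately show ?thesis by blast
qed

lemma lex_max_unique:
  fixes f :: "'a \<Rightarrow> 'c::linorder" and r :: "'a \<Rightarrow> 'b::linorder"
  assumes "finite V" "V \<noteq> {}" "inj_on r V"
  shows "\<exists>!a. a \<in> V \<and> (\<forall>w\<in>V. w \<noteq> a \<longrightarrow> f w < f a \<or> (f w = f a \<and> r w < r a))"
proof -
  define g where "g w = (f w, r w)" for w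
  have "inj_on g V" using assms(3) unfolding g_def inj_on_def by simp
  have "Max (g ` V) \<in> g ` V" using assms(1,2) by simp
  then obtain a where a: "a \<in> V" "g a = Max (g ` V)" by (metis imageE)
  have "g w < g a" if "w \<in> V" "w \<noteq> a" for w
    using Max_ge[of "g ` V" "g w"] inj_onD[OF \<open>inj_on g V\<close>, of w a] that a assms(1)
    by (auto simp: order.order_iff_strict)
  then have "\<forall>w\<in>V. w \<noteq> a \<longrightarrow> f w < f a \<or> (f w = f a \<and> r w < r a)"
    unfolding g_def by (simp add: less_prod_def')
  with a(1) show ?thesis by (intro ex1I[of _ a]) (simp, metis less_asym)
qed

locale ranked_graph = connected_graph V E for V :: "'a set" and E +
  fixes r :: "'a \<Rightarrow> 'b::linorder"
  assumes inj_r: "inj_on r V"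
begin

lemma Max_query: "u \<in> V \<Longrightarrow> Max (query V E u ` V) = e u"
  unfolding ecc_def query_def by (rule arg_cong[where f=Max]) auto

lemma row_antipode_query: "row_antipode V r (query V E u) = antipode V E r u"
  unfolding row_antipode_def antipode_def query_def by (rule arg_cong[where f=The]) auto

lemma antipode_is_farthest:
  assumes "u \<in> V"
  shows "antipode V E r u \<in> V" "d u (antipode V E r u) = e u"
proof -
  let ?a = "antipode V E r u"
  have "?a \<in> V \<and> (\<forall>w\<in>V. w \<noteq> ?a \<longrightarrow> d u w < d u ?a \<or> (d u w = d u ?a \<and> r w < r ?a))"
    unfolding antipode_def by (rule theI') (rule lex_max_unique[OF finite_V V_nonempty inj_r])
  then show "?a \<in> V" "d u ?a = e u"
    using ecc_attained[OF assms] dist_le_ecc[OF assms] by (metis le_antisym less_imp_le)+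
qed

lemma row_ecc_low_query:
  "L \<subseteq> V \<Longrightarrow> \<forall>x\<in>L. K x = query V E x \<Longrightarrow> v \<in> V \<Longrightarrow> row_ecc_low K L v = ecc_low E L v"
  unfolding row_ecc_low_def ecc_low_def
  by (rule arg_cong[where f=Max], rule image_cong) (auto simp: query_def dist_commute)

lemma row_ecc_up_query:
  "U \<subseteq> V \<Longrightarrow> \<forall>x\<in>U. K x = query V E x \<Longrightarrow> v \<in> V \<Longrightarrow> row_ecc_up V K U v = ecc_up V E U v"
  unfolding row_ecc_up_def ecc_up_def
proof (rule arg_cong[where f=Min], rule image_cong)
  fix x assume "U \<subseteq> V" "\<forall>x\<in>U. K x = query V E x" "v \<in> V" "x \<in> U"
  then show "K x v + Max (K x ` V) = d v x + e x" using Max_query[of x] by (auto simp: query_def dist_commute)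
qed simp

lemma row_undetermined_query:
  "L \<subseteq> V \<Longrightarrow> U \<subseteq> V \<Longrightarrow> \<forall>x\<in>L \<union> U. K x = query V E x \<Longrightarrow> v \<in> V \<Longrightarrow>
     row_undetermined V K L U v \<longleftrightarrow> undetermined V E L U v"
  unfolding row_undetermined_def undetermined_def
  using row_ecc_low_query[of L K v] row_ecc_up_query[of U K v] by auto

lemma antipode_image_subset: "antipode V E r ` V \<subseteq> V"
  using antipode_is_farthest(1) by blast

text \<open>Each node of \<open>L\<close> costs two queries: the undetermined node whose antipode it is, and its own.\<close>
fun alg_invariant :: "'a alg_state \<Rightarrow> nat \<Rightarrow> bool" where
  "alg_invariant (L, U, P, K) n \<longleftrightarrow>
     L \<subseteq> antipode V E r ` V \<and> U \<subseteq> Upre V E \<and> (\<forall>x\<in>L \<union> U. K x = query V E x)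
     \<and> (\<forall>a. P = Some a \<longrightarrow> a \<in> antipode V E r ` V - L)
     \<and> n = card U + 2 * card L + (if P = None then 0 else 1)"

lemma invariant_subsets:
  "alg_invariant (L, U, P, K) n \<Longrightarrow>
     L \<subseteq> V \<and> U \<subseteq> Upre V E \<and> U \<subseteq> V \<and> (\<forall>y\<in>L \<union> U. K y = query V E y)"
  using antipode_image_subset Upre_subset by auto

lemma invariant_pending_step:
  assumes "alg_invariant (L, U, Some a, K) n"
  shows "alg_invariant (state_update V r (L, U, Some a, K) (a, query V E a)) (Suc n)"
proof -
  have "finite L" using invariant_subsets[OF assms] finite_subset_V by blast
  then show ?thesis using assms by auto
qed

lemma invariant_antipode_step:
  assumes inv: "alg_invariant (L, U, None, K) n" and x: "x \<in> V"
    and open_x: "L = {} \<or> row_ecc_low K L x < e x"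
  shows "alg_invariant (L, U, Some (antipode V E r x), K(x := query V E x)) (Suc n)"
proof -
  have L: "L \<subseteq> V" "\<forall>y\<in>L. K y = query V E y" using invariant_subsets[OF inv] by auto
  have "antipode V E r x \<notin> L"
  proof
    assume "antipode V E r x \<in> L"
    then have "e x \<le> row_ecc_low K L x"
      using dist_le_ecc_low[OF L(1)] antipode_is_farthest(2)[OF x] row_ecc_low_query[OF L x] by metis
    then show False using open_x \<open>antipode V E r x \<in> L\<close> by auto
  qed
  then show ?thesis using inv x by auto
qed

lemma invariant_Upre_step:
  assumes "alg_invariant (L, U, None, K) n" "x \<in> Upre V E - U"
  shows "alg_invariant (L, insert x U, None, K(x := query V E x)) (Suc n)"
proof -
  have "finite U" using invariant_subsets[OF assms(1)] finite_subset_V by blast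
  then show ?thesis using assms by auto
qed

lemma least_row_undetermined:
  assumes inv: "alg_invariant (L, U, None, K) n"
    and open_nodes: "{v \<in> V. row_undetermined V K L U v} \<noteq> {}"
  defines "x \<equiv> arg_min_on (row_ecc_low K L) {v \<in> V. row_undetermined V K L U v}"
  shows "x \<in> V" "undetermined V E L U x"
    and "\<And>w. w \<in> V \<Longrightarrow> undetermined V E L U w \<Longrightarrow> ecc_low E L x \<le> ecc_low E L w"
proof -
  let ?D = "{v \<in> V. row_undetermined V K L U v}"
  have "finite ?D" using finite_V by simp
  then have "x \<in> ?D" "\<And>w. w \<in> ?D \<Longrightarrow> row_ecc_low K L x \<le> row_ecc_low K L w"
    unfolding x_def using arg_min_if_finite(1)[OF _ open_nodes] arg_min_least[OF _ open_nodes] by blast+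
  moreover have L: "L \<subseteq> V" "\<forall>y\<in>L. K y = query V E y" and "U \<subseteq> V"
    and K: "\<forall>y\<in>L \<union> U. K y = query V E y"
    using invariant_subsets[OF inv] by auto
  moreover have "row_undetermined V K L U w \<longleftrightarrow> undetermined V E L U w" if "w \<in> V" for w
    using row_undetermined_query[OF L(1) \<open>U \<subseteq> V\<close> K that] .
  ultimately show "x \<in> V" "undetermined V E L U x"
    and "\<And>w. w \<in> V \<Longrightarrow> undetermined V E L U w \<Longrightarrow> ecc_low E L x \<le> ecc_low E L w"
    using row_ecc_low_query[OF L] by auto
qed

lemma invariant_step:
  assumes inv: "alg_invariant (replay V r h) n" and asks_x: "ecc_algorithm V r h = Inl x"
  shows "x \<in> V \<and> alg_invariant (replay V r (h @ [(x, query V E x)])) (Suc n)"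
proof -
  obtain L U P K where S: "replay V r h = (L, U, P, K)" by (metis prod_cases4)
  show ?thesis
  proof (cases P)
    case (Some a)
    then have "x = a" "a \<in> V" using asks_x inv S antipode_image_subset by (auto simp: ecc_algorithm_def)
    then show ?thesis using invariant_pending_step[of L U a K n] inv S Some by (simp add: replay_snoc)
  next
    case None
    have inv': "alg_invariant (L, U, None, K) n" using inv S None by simp
    have "{v \<in> V. row_undetermined V K L U v} \<noteq> {}"
      and "x = arg_min_on (row_ecc_low K L) {v \<in> V. row_undetermined V K L U v}"
      using asks_x S None unfolding ecc_algorithm_def by (auto simp: Let_def split: if_splits)
    note x = least_row_undetermined[OF inv' this(1), folded this(2)]
    have L: "L \<subseteq> V" "\<forall>y\<in>L. K y = query V E y" and U: "U \<subseteq> Upre V E"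
      using invariant_subsets[OF inv'] by auto
    show ?thesis
    proof (cases "L = {} \<or> row_ecc_low K L x < e x")
      case True
      then have "replay V r (h @ [(x, query V E x)])
          = (L, U, Some (antipode V E r x), K(x := query V E x))"
        using S None x(1) by (simp add: replay_snoc Max_query row_antipode_query)
      then show ?thesis using invariant_antipode_step[OF inv' x(1) True] x(1) by simp
    next
      case False
      then have "x \<in> Upre V E - U"
        using least_undetermined_in_Upre[OF L(1) _ U x] row_ecc_low_query[OF L x(1)] by auto
      moreover have "replay V r (h @ [(x, query V E x)]) = (L, insert x U, None, K(x := query V E x))"
        using S None x(1) False by (simp add: replay_snoc Max_query)
      ultimately show ?thesis using invariant_Upre_step[OF inv'] x(1) by simp
    qed
  qed
qed

lemma invariant_halt:
  assumes inv: "alg_invariant (replay V r h) n" and halt: "ecc_algorithm V r h = Inr out"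
  shows "\<exists>ecc_out L U. out = (ecc_out, L, U) \<and> n = card U + 2 * card L \<and> (\<forall>v\<in>V. ecc_out v = e v)
     \<and> tight_lower V E L \<and> L \<subseteq> antipode V E r ` V \<and> U = Upre V E"
proof -
  obtain L U P K where S: "replay V r h = (L, U, P, K)" by (metis prod_cases4)
  have None: "P = None" using halt S by (cases P) (auto simp: ecc_algorithm_def)
  have L: "L \<subseteq> V" and U: "U \<subseteq> Upre V E" "U \<subseteq> V" and K: "\<forall>y\<in>L \<union> U. K y = query V E y"
    using invariant_subsets[of L U P K n] inv S by auto
  have out: "out = (row_ecc_low K L, L, U)" and "\<forall>v\<in>V. \<not> row_undetermined V K L U v"
    using halt S None unfolding ecc_algorithm_def by (auto simp: Let_def split: if_splits)
  then have "\<forall>v\<in>V. \<not> undetermined V E L U v" using row_undetermined_query[OF L U(2) K] by simp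
  then have tight: "tight_lower V E L" "tight_upper V E U"
    using tight_if_none_undetermined[OF L U(2)] by auto
  then have "\<forall>v\<in>V. row_ecc_low K L v = e v"
    using row_ecc_low_query[OF L] K unfolding tight_lower_def by simp
  moreover have "U = Upre V E" using U(1) Upre_subset_tight_upper[OF tight(2)] by blast
  ultimately show ?thesis using inv S None out tight(1) by auto
qed

abbreviation run where "run \<equiv> trace (ecc_algorithm V r) (query V E)"

lemma invariant_run: "alg_invariant (replay V r (run j)) (length (run j))"
proof (induction j)
  case 0
  then show ?case by (simp add: replay_def)
next
  case (Suc j)
  then show ?case using invariant_step[OF Suc] by (cases "ecc_algorithm V r (run j)") auto
qed

lemma length_run_le: "length (run j) \<le> 3 * card V + 1"
proof -
  obtain L U P K where S: "replay V r (run j) = (L, U, P, K)" by (metis prod_cases4)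
  then have inv: "alg_invariant (L, U, P, K) (length (run j))" using invariant_run[of j] by simp
  then have "card L \<le> card V" "card U \<le> card V"
    using invariant_subsets[OF inv] finite_V card_mono by auto
  then show ?thesis using inv by auto
qed

lemma ecc_algorithm_correct:
  "\<exists>k ecc_out L U.
      (\<forall>j<k. \<exists>x\<in>V. ecc_algorithm V r (run j) = Inl x)
    \<and> ecc_algorithm V r (run k) = Inr (ecc_out, L, U)
    \<and> k = card U + 2 * card L
    \<and> (\<forall>v\<in>V. ecc_out v = e v)
    \<and> tight_lower V E L \<and> L \<subseteq> antipode V E r ` V
    \<and> U = Upre V E"
proof -
  obtain k out where queries: "\<forall>j<k. \<exists>x. ecc_algorithm V r (run j) = Inl x"
    and halt: "ecc_algorithm V r (run k) = Inr out"
    using trace_halts[OF length_run_le] by blast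
  have "\<forall>j<k. \<exists>x\<in>V. ecc_algorithm V r (run j) = Inl x"
    using queries invariant_step[OF invariant_run] by blast
  moreover have "length (run k) = k" using length_trace queries by blast
  ultimately show ?thesis using invariant_halt[OF invariant_run halt] halt by auto
qed

end

theorem theorem5:
  shows "(\<exists>alg :: 'a set \<Rightarrow> ('a \<Rightarrow> 'b::linorder) \<Rightarrow> 'a strategy.
     \<forall>V E r. conn_graph V E \<and> inj_on r V \<longrightarrow>
       (\<exists>k ecc_out L U.
          (\<forall>j<k. \<exists>x\<in>V. alg V r (trace (alg V r) (query V E) j) = Inl x)
        \<and> alg V r (trace (alg V r) (query V E) k) = Inr (ecc_out, L, U)
        \<and> k = card U + 2 * card L
        \<and> (\<forall>v\<in>V. ecc_out v = ecc V E v)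
        \<and> tight_lower V E L \<and> L \<subseteq> antipode V E r ` V
        \<and> U = Upre V E))
   \<and> (\<forall>(V :: 'a set) E. conn_graph V E \<longrightarrow>
        tight_upper V E (Upre V E)
      \<and> (\<forall>U'. tight_upper V E U' \<longrightarrow>
             card (Upre V E) \<le> card U' \<and> (card U' = card (Upre V E) \<longrightarrow> U' = Upre V E)))"
proof (intro conjI[OF exI[of _ ecc_algorithm]] allI impI)
  fix V :: "'a set" and E and r :: "'a \<Rightarrow> 'b"
  assume "conn_graph V E \<and> inj_on r V"
  then have "ranked_graph V E r" by unfold_locales auto
  from ranked_graph.ecc_algorithm_correct[OF this]
  show "\<exists>k ecc_out L U.
          (\<forall>j<k. \<exists>x\<in>V. ecc_algorithm V r (trace (ecc_algorithm V r) (query V E) j) = Inl x)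
        \<and> ecc_algorithm V r (trace (ecc_algorithm V r) (query V E) k) = Inr (ecc_out, L, U)
        \<and> k = card U + 2 * card L \<and> (\<forall>v\<in>V. ecc_out v = ecc V E v)
        \<and> tight_lower V E L \<and> L \<subseteq> antipode V E r ` V \<and> U = Upre V E" .
next
  fix V :: "'a set" and E
  assume "conn_graph V E"
  then have "connected_graph V E" by unfold_locales
  then show "tight_upper V E (Upre V E) \<and> (\<forall>U'. tight_upper V E U' \<longrightarrow>
      card (Upre V E) \<le> card U' \<and> (card U' = card (Upre V E) \<longrightarrow> U' = Upre V E))"
    using connected_graph.tight_upper_Upre connected_graph.Upre_minimum_tight_upper by blast
qed

end
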